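(* Let $H$, $L$ be as in the context and let $(S,\mathcal T_0)$ be a feasible solution. Then $\omega(H_{\mathcal T_0})=\max\{\omega_j(H_{\mathcal T_0}): j\in[NZ),\ j\bmod Z<LS\}$.
   Context: Notation: $[n)=\{0,1,\dots,n-1\}$. Let $M,N,Z$ be positive integers and let $H$ be a binary $MZ\times NZ$ matrix made of $M\times N$ blocks, each a $Z\times Z$ circulant (row $i$ of a block is the cyclic right shift by $i$ of its row $0$); assume $H$ has no zero row and no two identical rows. For $\mathcal A\subseteq[MZ)$, $H_{\mathcal A}$ is the submatrix of rows indexed by $\mathcal A$. $\omega_j(A)$ is the Hamming weight of column $j$ of $A$ and $\omega(A)=\max_j\omega_j(A)$. For $i\in[MZ)$ and integer $s$, $\pi^s(i)=Z\lfloor i/Z\rfloor+((i+s)\bmod Z)$ and $\pi^s(\mathcal T)=\{\pi^s(x):x\in\mathcal T\}$. Fix an integer $L>1$. A pair $(S,\mathcal T_0)$ ($S$ a positive integer, $\mathcal T_0\subseteq[MZ)$) is a feasible solution if, with $\mathcal T_l=\pi^{lS}(\mathcal T_0)$ for $l\in[L)$, the sets $\mathcal T_0,\dots,\mathcal T_{L-1}$ are pairwise disjoint with union $[MZ)$. *)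

theory Defs
  imports Main
begin

text \<open>A binary MZ x NZ matrix is represented as H :: nat => nat => bool,
  where H i j is the entry in row i, column j (only i < M*Z, j < N*Z matter).\<close>

definition qc_matrix :: "nat \<Rightarrow> nat \<Rightarrow> nat \<Rightarrow> (nat \<Rightarrow> nat \<Rightarrow> bool) \<Rightarrow> bool" where
  "qc_matrix M N Z H \<longleftrightarrow>
     (\<forall>i < M*Z. \<forall>j < N*Z.
        H i j = H (Z * (i div Z)) (Z * (j div Z) + ((j mod Z + Z - i mod Z) mod Z)))"

definition no_zero_row :: "nat \<Rightarrow> nat \<Rightarrow> nat \<Rightarrow> (nat \<Rightarrow> nat \<Rightarrow> bool) \<Rightarrow> bool" where
  "no_zero_row M N Z H \<longleftrightarrow> (\<forall>i < M*Z. \<exists>j < N*Z. H i j)"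

definition distinct_rows :: "nat \<Rightarrow> nat \<Rightarrow> nat \<Rightarrow> (nat \<Rightarrow> nat \<Rightarrow> bool) \<Rightarrow> bool" where
  "distinct_rows M N Z H \<longleftrightarrow>
     (\<forall>i1 < M*Z. \<forall>i2 < M*Z. i1 \<noteq> i2 \<longrightarrow> (\<exists>j < N*Z. H i1 j \<noteq> H i2 j))"

definition perm_pi :: "nat \<Rightarrow> nat \<Rightarrow> nat \<Rightarrow> nat" where
  "perm_pi Z s i = Z * (i div Z) + ((i + s) mod Z)"

definition feasible :: "nat \<Rightarrow> nat \<Rightarrow> nat \<Rightarrow> nat \<Rightarrow> nat set \<Rightarrow> bool" where
  "feasible M Z L S T0 \<longleftrightarrow>
     S > 0 \<and> T0 \<subseteq> {..<M*Z} \<and>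
     (\<forall>l1 < L. \<forall>l2 < L. l1 \<noteq> l2 \<longrightarrow>
        perm_pi Z (l1*S) ` T0 \<inter> perm_pi Z (l2*S) ` T0 = {}) \<and>
     (\<Union>l<L. perm_pi Z (l*S) ` T0) = {..<M*Z}"

definition col_weight :: "(nat \<Rightarrow> nat \<Rightarrow> bool) \<Rightarrow> nat set \<Rightarrow> nat \<Rightarrow> nat" where
  "col_weight H A j = card {i \<in> A. H i j}"

definition max_col_weight :: "nat \<Rightarrow> nat \<Rightarrow> (nat \<Rightarrow> nat \<Rightarrow> bool) \<Rightarrow> nat set \<Rightarrow> nat" where
  "max_col_weight N Z H A = Max (col_weight H A ` {..<N*Z})"

end

theory Submission
  imports Defs
begin

text \<open>Feasibility forces \<open>T\<^sub>0\<close> to be invariant under \<open>\<pi>^(LS)\<close>: if \<open>\<pi>^(LS) x\<close>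
  lay in \<open>T\<^sub>l\<close> with \<open>l \<ge> 1\<close>, cancelling one \<open>\<pi>^S\<close> would put \<open>\<pi>^((L-1)S) x\<close> in both
  \<open>T\<^sub>L\<^sub>-\<^sub>1\<close> and \<open>T\<^sub>l\<^sub>-\<^sub>1\<close>. A quasi-cyclic \<open>H\<close> satisfies \<open>H (\<pi>^s i) (\<pi>^s j) = H i j\<close>,
  so applying \<open>\<pi>^(LS)\<close> to the columns preserves the column weights of \<open>H\<^sub>T\<^sub>0\<close>, and every
  column \<open>j\<close> is the image under a power of \<open>\<pi>^(LS)\<close> of the column of its block with
  offset \<open>(j mod Z) mod LS\<close>.\<close>

lemma perm_pi_0 [simp]: "perm_pi Z 0 i = i"
  by (simp add: perm_pi_def)

lemma perm_pi_mult_self [simp]: "perm_pi Z (Z * k) i = i"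
  by (simp add: perm_pi_def)

lemma perm_pi_add: "perm_pi Z a (perm_pi Z b i) = perm_pi Z (a + b) i"
proof (cases "Z = 0")
  case False
  have "(a + (Z * (i div Z) + (b + i) mod Z)) mod Z = (a + (b + i)) mod Z"
    by (metis add.left_commute mod_add_right_eq mod_mult_self3 mult.commute)
  with False show ?thesis by (simp add: perm_pi_def ac_simps)
qed (simp add: perm_pi_def)

lemma inj_perm_pi: "inj (perm_pi Z s)"
proof (cases "Z = 0")
  case True
  then show ?thesis by (simp add: perm_pi_def inj_def)
next
  case False
  then have "perm_pi Z (Z * s - s) \<circ> perm_pi Z s = id"
    by (simp add: fun_eq_iff perm_pi_add)
  then show ?thesis by (metis inj_on_id inj_on_imageI2)
qed

lemma perm_pi_div: "0 < Z \<Longrightarrow> perm_pi Z s i div Z = i div Z"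
  by (simp add: perm_pi_def)

lemma perm_pi_mod: "0 < Z \<Longrightarrow> perm_pi Z s i mod Z = (i + s) mod Z"
  by (simp add: perm_pi_def)

lemma perm_pi_less:
  assumes "0 < Z" and "i < M * Z"
  shows "perm_pi Z s i < M * Z"
proof -
  have "perm_pi Z s i div Z < M"
    using assms by (simp add: perm_pi_div less_mult_imp_div_less)
  then show ?thesis
    using assms(1) by (simp add: div_less_iff_less_mult)
qed

lemma perm_pi_image_mult:
  assumes "perm_pi Z s ` A = A"
  shows "perm_pi Z (k * s) ` A = A"
proof (induction k)
  case (Suc k)
  have "perm_pi Z (Suc k * s) ` A = perm_pi Z s ` perm_pi Z (k * s) ` A"
    by (simp add: image_image perm_pi_add)
  with Suc assms show ?case by simp
qed simp

lemma int_cyclic_diff: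
  assumes "0 < Z"
  shows "int ((a mod Z + Z - b mod Z) mod Z) = (int a - int b) mod int Z"
proof -
  have "b mod Z < Z" using assms by simp
  then have "int (a mod Z + Z - b mod Z) = int (a mod Z) + int Z - int (b mod Z)"
    by linarith
  then have "int ((a mod Z + Z - b mod Z) mod Z) = (int a mod int Z + int Z - int b mod int Z) mod int Z"
    by (simp add: of_nat_mod)
  also have "\<dots> = (int a - int b) mod int Z"
    by (metis diff_add_eq mod_add_self2 mod_diff_eq)
  finally show ?thesis .
qed

lemma cyclic_diff_add:
  fixes Z :: nat
  assumes "0 < Z"
  shows "((a + s) mod Z + Z - (b + s) mod Z) mod Z = (a mod Z + Z - b mod Z) mod Z"
  using int_cyclic_diff[OF assms, of "a + s" "b + s"] int_cyclic_diff[OF assms, of a b] by simp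

lemma qc_matrix_perm_pi:
  assumes "0 < Z" and "qc_matrix M N Z H" and "i < M * Z" and "j < N * Z"
  shows "H (perm_pi Z s i) (perm_pi Z s j) = H i j"
proof -
  have "H (perm_pi Z s i) (perm_pi Z s j)
      = H (Z * (i div Z)) (Z * (j div Z) + ((j + s) mod Z + Z - (i + s) mod Z) mod Z)"
    using assms perm_pi_less[OF assms(1)] unfolding qc_matrix_def
    by (simp add: perm_pi_div perm_pi_mod)
  also have "\<dots> = H i j"
    using assms unfolding qc_matrix_def by (simp add: cyclic_diff_add)
  finally show ?thesis .
qed

lemma feasible_perm_pi_period:
  assumes "0 < Z" and "feasible M Z L S T0"
  shows "perm_pi Z (L * S) ` T0 = T0"
proof -
  have T0: "T0 \<subseteq> {..<M * Z}"
    and disjoint: "\<And>l1 l2. l1 < L \<Longrightarrow> l2 < L \<Longrightarrow> l1 \<noteq> l2 \<Longrightarrow>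
        perm_pi Z (l1 * S) ` T0 \<inter> perm_pi Z (l2 * S) ` T0 = {}"
    and cover: "(\<Union>l<L. perm_pi Z (l * S) ` T0) = {..<M * Z}"
    using assms(2) unfolding feasible_def by auto
  have "perm_pi Z (L * S) x \<in> T0" if x: "x \<in> T0" for x
  proof -
    have "x < M * Z"
      using T0 x by auto
    then have "perm_pi Z (L * S) x < M * Z"
      by (rule perm_pi_less[OF assms(1)])
    then obtain l t where l: "l < L" and t: "t \<in> T0"
      and eq: "perm_pi Z (L * S) x = perm_pi Z (l * S) t"
      using cover by blast
    show ?thesis
    proof (cases l)
      case 0
      with eq t show ?thesis by simp
    next
      case (Suc k)
      have "L * S = S + (L - 1) * S"
        using l by (simp add: mult_eq_if)
      then have "perm_pi Z S (perm_pi Z ((L - 1) * S) x) = perm_pi Z S (perm_pi Z (k * S) t)"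
        using eq Suc by (simp add: perm_pi_add)
      then have "perm_pi Z ((L - 1) * S) x = perm_pi Z (k * S) t"
        using inj_perm_pi by (meson injD)
      with x t have "perm_pi Z ((L - 1) * S) ` T0 \<inter> perm_pi Z (k * S) ` T0 \<noteq> {}"
        by blast
      with disjoint[of "L - 1" k] l Suc show ?thesis by auto
    qed
  qed
  then have "perm_pi Z (L * S) ` T0 \<subseteq> T0"
    by blast
  moreover have "finite T0"
    using T0 finite_subset by blast
  ultimately show ?thesis
    using endo_inj_surj inj_on_subset[OF inj_perm_pi subset_UNIV] by blast
qed

lemma col_weight_perm_pi:
  assumes "0 < Z" and "qc_matrix M N Z H" and "A \<subseteq> {..<M * Z}"
    and "perm_pi Z s ` A = A" and "j < N * Z"
  shows "col_weight H A (perm_pi Z s j) = col_weight H A j"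
proof -
  have "{i \<in> A. H i (perm_pi Z s j)} = perm_pi Z s ` {i \<in> A. H i j}"
  proof (intro equalityI subsetI)
    fix i
    assume i: "i \<in> {i \<in> A. H i (perm_pi Z s j)}"
    then obtain i' where i': "i' \<in> A" and "i = perm_pi Z s i'"
      using assms(4) by blast
    moreover have "H i' j = H (perm_pi Z s i') (perm_pi Z s j)"
      using i' assms(3) qc_matrix_perm_pi[OF assms(1,2) _ assms(5)] by auto
    ultimately show "i \<in> perm_pi Z s ` {i \<in> A. H i j}"
      using i by auto
  next
    fix i
    assume "i \<in> perm_pi Z s ` {i \<in> A. H i j}"
    then obtain i' where i': "i' \<in> A" "H i' j" and i: "i = perm_pi Z s i'"
      by blast
    moreover have "H i' j = H (perm_pi Z s i') (perm_pi Z s j)"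
      using i' assms(3) qc_matrix_perm_pi[OF assms(1,2) _ assms(5)] by auto
    ultimately show "i \<in> {i \<in> A. H i (perm_pi Z s j)}"
      using assms(4) by auto
  qed
  then show ?thesis
    unfolding col_weight_def by (simp add: card_image inj_on_subset[OF inj_perm_pi])
qed

lemma mod_mod_less_divisor: "0 < (Z::nat) \<Longrightarrow> m mod Z mod n < Z"
  using le_less_trans[OF mod_less_eq_dividend mod_less_divisor] .

lemma perm_pi_block_residue:
  assumes "0 < Z"
  shows "perm_pi Z (j mod Z div n * n) (Z * (j div Z) + j mod Z mod n) = j"
proof -
  have "j mod Z mod n < Z"
    using assms by (rule mod_mod_less_divisor)
  then show ?thesis
    by (simp add: perm_pi_def add.assoc)
qed

lemma col_weight_image_initial_columns:
  assumes "0 < Z" and "0 < n" and "qc_matrix M N Z H" and "A \<subseteq> {..<M * Z}"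
    and "perm_pi Z n ` A = A"
  shows "col_weight H A ` {..<N * Z} = col_weight H A ` {j. j < N * Z \<and> j mod Z < n}"
proof
  show "col_weight H A ` {..<N * Z} \<subseteq> col_weight H A ` {j. j < N * Z \<and> j mod Z < n}"
  proof (intro image_subsetI)
    fix j
    assume j: "j \<in> {..<N * Z}"
    define j0 where "j0 = Z * (j div Z) + j mod Z mod n"
    have "j0 \<le> j"
      unfolding j0_def by (metis add_le_mono div_mult_mod_eq le_refl mod_less_eq_dividend mult.commute)
    with j have j0: "j0 < N * Z" by simp
    have "j mod Z mod n < Z"
      using assms(1) by (rule mod_mod_less_divisor)
    then have "j0 mod Z < n"
      using assms(2) unfolding j0_def by simp
    moreover have "col_weight H A j = col_weight H A j0"
      using col_weight_perm_pi[OF assms(1,3,4) perm_pi_image_mult[OF assms(5)] j0,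
          of "j mod Z div n"]
      unfolding j0_def perm_pi_block_residue[OF assms(1)] .
    ultimately show "col_weight H A j \<in> col_weight H A ` {j. j < N * Z \<and> j mod Z < n}"
      using j0 by blast
  qed
qed auto

theorem theorem4:
  fixes M N Z L S :: nat and H :: "nat \<Rightarrow> nat \<Rightarrow> bool" and T0 :: "nat set"
  assumes "M > 0" and "N > 0" and "Z > 0"
    and "qc_matrix M N Z H"
    and "no_zero_row M N Z H"
    and "distinct_rows M N Z H"
    and "L > 1"
    and "feasible M Z L S T0"
  shows "max_col_weight N Z H T0 =
           Max (col_weight H T0 ` {j. j < N*Z \<and> j mod Z < L*S})"
proof -
  have "0 < S" and T0: "T0 \<subseteq> {..<M * Z}"
    using \<open>feasible M Z L S T0\<close> unfolding feasible_def by auto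
  with \<open>L > 1\<close> have "0 < L * S" by simp
  moreover have "perm_pi Z (L * S) ` T0 = T0"
    using feasible_perm_pi_period \<open>Z > 0\<close> \<open>feasible M Z L S T0\<close> .
  ultimately show ?thesis
    unfolding max_col_weight_def
    using col_weight_image_initial_columns[OF \<open>Z > 0\<close> _ \<open>qc_matrix M N Z H\<close> T0] by metis
qed

end
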